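(* Let $E\subseteq\mathbb{R}$. The set $\mathbf{AC}(E)$ of all Abel continuous functions on $E$ is a complete subspace of the space of all continuous real functions on $E$ with respect to uniform convergence: every sequence in $\mathbf{AC}(E)$ that is uniformly Cauchy on $E$ converges uniformly on $E$ to a function belonging to $\mathbf{AC}(E)$.
   Context: A sequence $(p_n)_{n\ge0}$ is Abel convergent to $\ell$ if $\sum_{k=0}^{\infty}p_k x^k$ converges for every $0\le x<1$ and $\lim_{x\to 1^-}(1-x)\sum_{k=0}^{\infty}p_k x^k=\ell$. A function $g:E\to\mathbb{R}$ is Abel continuous on $E$ if for every sequence $(p_n)$ in $E$ Abel convergent to some $\ell\in E$, $(g(p_n))$ is Abel convergent to $g(\ell)$. *)

theory Defs
  imports "HOL-Analysis.Analysis"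
begin

definition abel_convergent :: "(nat \<Rightarrow> real) \<Rightarrow> real \<Rightarrow> bool" where
  "abel_convergent p l \<longleftrightarrow>
     (\<forall>x::real. 0 \<le> x \<and> x < 1 \<longrightarrow> summable (\<lambda>k. p k * x ^ k)) \<and>
     ((\<lambda>x. (1 - x) * (\<Sum>k. p k * x ^ k)) \<longlongrightarrow> l) (at_left 1)"

definition abel_continuous :: "real set \<Rightarrow> (real \<Rightarrow> real) \<Rightarrow> bool" where
  "abel_continuous E g \<longleftrightarrow>
     (\<forall>p l. (\<forall>n. p n \<in> E) \<and> l \<in> E \<and> abel_convergent p l
        \<longrightarrow> abel_convergent (\<lambda>n. g (p n)) (g l))"

end

theory Submission
  imports Defs
begin

text \<open>Abel means are averages, \<open>(1 - x) * (\<Sum>k. x ^ k) = 1\<close>, so a sequence bounded by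
  \<open>d\<close> has Abel means bounded by \<open>d\<close>. Hence Abel convergence survives uniform approximation of the
  sequence, and composing with a uniform limit of Abel continuous functions is such an
  approximation. Completeness then comes from the completeness of uniform convergence itself.\<close>

lemma power_series_bounded_coeffs:
  fixes e :: "nat \<Rightarrow> real" and x d :: real
  assumes bound: "\<And>k. \<bar>e k\<bar> \<le> d" and x: "0 \<le> x" "x < 1"
  shows "summable (\<lambda>k. e k * x ^ k)" and "\<bar>(1 - x) * (\<Sum>k. e k * x ^ k)\<bar> \<le> d"
proof -
  have geo: "summable (\<lambda>k. x ^ k)" and geo_sum: "(\<Sum>k. x ^ k) = 1 / (1 - x)"
    using x by (simp_all add: summable_geometric suminf_geometric)
  have majorant: "summable (\<lambda>k. d * x ^ k)"
    using geo by (rule summable_mult)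
  have term_bound: "\<bar>e k * x ^ k\<bar> \<le> d * x ^ k" for k
    using bound[of k] x by (simp add: abs_mult mult_right_mono)
  have abs_summable: "summable (\<lambda>k. \<bar>e k * x ^ k\<bar>)"
    by (rule summable_comparison_test'[OF majorant]) (simp add: term_bound)
  then show "summable (\<lambda>k. e k * x ^ k)"
    by (rule summable_rabs_cancel)
  have "\<bar>\<Sum>k. e k * x ^ k\<bar> \<le> (\<Sum>k. \<bar>e k * x ^ k\<bar>)"
    by (rule summable_rabs[OF abs_summable])
  also have "\<dots> \<le> (\<Sum>k. d * x ^ k)"
    by (rule suminf_le[OF term_bound abs_summable majorant])
  also have "\<dots> = d / (1 - x)"
    using suminf_mult[OF geo, of d] geo_sum by simp
  finally have "\<bar>\<Sum>k. e k * x ^ k\<bar> \<le> d / (1 - x)" .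
  with x show "\<bar>(1 - x) * (\<Sum>k. e k * x ^ k)\<bar> \<le> d"
    by (simp add: abs_mult pos_le_divide_eq mult.commute)
qed

lemma abel_convergent_uniform_approx:
  fixes p :: "nat \<Rightarrow> real" and l :: real
  assumes approx: "\<And>\<epsilon>. \<epsilon> > 0 \<Longrightarrow>
      \<exists>q m. abel_convergent q m \<and> (\<forall>k. \<bar>p k - q k\<bar> \<le> \<epsilon>) \<and> \<bar>l - m\<bar> \<le> \<epsilon>"
  shows "abel_convergent p l"
proof -
  have mean_split: "summable (\<lambda>k. p k * x ^ k) \<and>
      (1 - x) * (\<Sum>k. p k * x ^ k) =
        (1 - x) * (\<Sum>k. q k * x ^ k) + (1 - x) * (\<Sum>k. (p k - q k) * x ^ k) \<and>
      \<bar>(1 - x) * (\<Sum>k. (p k - q k) * x ^ k)\<bar> \<le> \<epsilon>"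
    if q: "abel_convergent q m" and close: "\<forall>k. \<bar>p k - q k\<bar> \<le> \<epsilon>" and x: "0 \<le> x" "x < 1"
    for q m \<epsilon> x
  proof -
    note diff = power_series_bounded_coeffs[of "\<lambda>k. p k - q k", OF spec[OF close] x]
    have sq: "summable (\<lambda>k. q k * x ^ k)"
      using q x by (simp add: abel_convergent_def)
    have p_eq: "(\<lambda>k. p k * x ^ k) = (\<lambda>k. q k * x ^ k + (p k - q k) * x ^ k)"
      by (simp add: algebra_simps)
    have "summable (\<lambda>k. p k * x ^ k)"
      unfolding p_eq by (rule summable_add[OF sq diff(1)])
    moreover have "(\<Sum>k. p k * x ^ k) = (\<Sum>k. q k * x ^ k) + (\<Sum>k. (p k - q k) * x ^ k)"
      unfolding p_eq by (rule suminf_add[OF sq diff(1), symmetric])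
    ultimately show ?thesis
      using diff(2) by (simp add: distrib_left)
  qed
  show ?thesis
    unfolding abel_convergent_def
  proof (intro conjI allI impI)
    fix x :: real assume "0 \<le> x \<and> x < 1"
    with approx[of 1] mean_split show "summable (\<lambda>k. p k * x ^ k)" by force
  next
    show "((\<lambda>x. (1 - x) * (\<Sum>k. p k * x ^ k)) \<longlongrightarrow> l) (at_left 1)"
    proof (rule tendstoI)
      fix \<epsilon> :: real assume "\<epsilon> > 0"
      then obtain q m where q: "abel_convergent q m" and close: "\<forall>k. \<bar>p k - q k\<bar> \<le> \<epsilon>/4"
        and lm: "\<bar>l - m\<bar> \<le> \<epsilon>/4"
        using approx[of "\<epsilon>/4"] by auto
      have "((\<lambda>x. (1 - x) * (\<Sum>k. q k * x ^ k)) \<longlongrightarrow> m) (at_left 1)"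
        using q by (simp add: abel_convergent_def)
      then have "eventually (\<lambda>x. dist ((1 - x) * (\<Sum>k. q k * x ^ k)) m < \<epsilon>/4) (at_left 1)"
        using \<open>\<epsilon> > 0\<close> by (intro tendstoD) simp_all
      moreover have "eventually (\<lambda>x::real. x \<in> {0<..<1}) (at_left 1)"
        by (rule eventually_at_left_real) simp
      ultimately show "eventually (\<lambda>x. dist ((1 - x) * (\<Sum>k. p k * x ^ k)) l < \<epsilon>) (at_left 1)"
      proof eventually_elim
        case (elim x)
        then have "0 \<le> x" "x < 1" by auto
        with mean_split[OF q close this] elim(1) lm show ?case
          unfolding dist_real_def by linarith
      qed
    qed
  qed
qed

lemma abel_continuous_uniform_limit:
  fixes E :: "real set" and f :: "nat \<Rightarrow> real \<Rightarrow> real"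
  assumes ac: "\<And>n. abel_continuous E (f n)" and lim: "uniform_limit E f g sequentially"
  shows "abel_continuous E g"
  unfolding abel_continuous_def
proof (intro allI impI, elim conjE)
  fix p l assume pE: "\<forall>n. p n \<in> E" and lE: "l \<in> E" and p: "abel_convergent p l"
  show "abel_convergent (\<lambda>k. g (p k)) (g l)"
  proof (rule abel_convergent_uniform_approx)
    fix \<epsilon> :: real assume "\<epsilon> > 0"
    then obtain N where "\<forall>n\<ge>N. \<forall>y\<in>E. dist (f n y) (g y) < \<epsilon>"
      using uniform_limitD[OF lim] unfolding eventually_sequentially by blast
    then have n: "\<forall>y\<in>E. dist (f N y) (g y) < \<epsilon>" by blast
    have "abel_convergent (\<lambda>k. f N (p k)) (f N l)"
      using ac[of N] pE lE p by (simp add: abel_continuous_def)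
    moreover have "\<forall>k. \<bar>g (p k) - f N (p k)\<bar> \<le> \<epsilon>" and "\<bar>g l - f N l\<bar> \<le> \<epsilon>"
      using n pE lE by (auto simp: dist_real_def abs_minus_commute less_imp_le)
    ultimately show "\<exists>q m. abel_convergent q m \<and> (\<forall>k. \<bar>g (p k) - q k\<bar> \<le> \<epsilon>) \<and> \<bar>g l - m\<bar> \<le> \<epsilon>"
      by blast
  qed
qed

theorem corollary10:
  fixes E :: "real set" and f :: "nat \<Rightarrow> real \<Rightarrow> real"
  assumes "\<And>n. abel_continuous E (f n)"
    and "uniformly_Cauchy_on E f"
  shows "\<exists>g. uniform_limit E f g sequentially \<and> abel_continuous E g"
proof -
  obtain g where "uniform_limit E f g sequentially"
    using Cauchy_uniformly_convergent[OF assms(2)] by (auto simp: uniformly_convergent_on_def)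
  with assms(1) show ?thesis by (blast intro: abel_continuous_uniform_limit)
qed

end
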